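(* Let $\varrho$ be a density operator on a Hilbert space $\mathcal H_d$ of finite dimension $d$. Then $$\sup_{\xi}\|\varrho-\xi\|_{\mathrm{tr}}=2\big(1-b(\varrho)\big),$$ where the supremum is over all density operators $\xi$ on $\mathcal H_d$ and $\|A\|_{\mathrm{tr}}=\operatorname{tr}|A|$.
   Context: For the convex set $Z=\mathcal S(\mathcal H_d)$ of density operators and $x,y\in Z$, the weight function is $t_y(x)=\sup\{0\leq t<1 : \frac{y-tx}{1-t}\in Z\}$, and the boundariness of $y$ is $b(y)=\inf_{x\in Z}t_y(x)$. (For states, $b(\varrho)$ equals the smallest eigenvalue of $\varrho$.) *)

theory Defs
  imports "HOL-Analysis.Analysis"
begin

text \<open>Operators on the d-dimensional Hilbert space H_d = complex^'n, d = CARD('n),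
  represented as complex matrices complex^'n^'n.\<close>

definition cmat_adjoint :: "complex^'n^'n \<Rightarrow> complex^'n^'n" where
  "cmat_adjoint A = (\<chi> i j. cnj (A $ j $ i))"

definition cmat_hermitian :: "complex^'n^'n \<Rightarrow> bool" where
  "cmat_hermitian A \<longleftrightarrow> cmat_adjoint A = A"

definition cmat_psd :: "complex^'n^'n \<Rightarrow> bool" where
  "cmat_psd A \<longleftrightarrow> cmat_hermitian A \<and>
     (\<forall>x::complex^'n. 0 \<le> Re (\<Sum>i\<in>UNIV. cnj (x $ i) * (A *v x) $ i))"

definition density :: "complex^'n^'n \<Rightarrow> bool" where
  "density A \<longleftrightarrow> cmat_psd A \<and> trace A = 1"

definition cmat_abs :: "complex^'n^'n \<Rightarrow> complex^'n^'n" where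
  "cmat_abs A = (THE P. cmat_psd P \<and> P ** P = cmat_adjoint A ** A)"

definition trace_norm :: "complex^'n^'n \<Rightarrow> real" where
  "trace_norm A = Re (trace (cmat_abs A))"

definition weight :: "complex^'n^'n \<Rightarrow> complex^'n^'n \<Rightarrow> real" where
  "weight y x = Sup {t::real. 0 \<le> t \<and> t < 1 \<and> density ((1 / (1 - t)) *\<^sub>R (y - t *\<^sub>R x))}"

definition boundariness :: "complex^'n^'n \<Rightarrow> real" where
  "boundariness y = Inf (weight y ` {x. density x})"

end

theory Submission imports Defs begin

text \<open>Diagonalise \<open>\<rho>\<close>; let \<open>\<lambda>\<close> be its smallest eigenvalue, with unit eigenvector \<open>v\<close>.
  Since \<open>\<rho> \<ge> \<lambda>\<close>, the operator \<open>\<rho> - t \<xi>\<close> is positive for every state \<open>\<xi>\<close> and \<open>t \<le> \<lambda>\<close>, so every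
  weight is at least \<open>\<lambda>\<close>; testing \<open>\<rho> - t |v\<rangle>\<langle>v|\<close> at \<open>v\<close> shows that the weight of \<open>|v\<rangle>\<langle>v|\<close> is at most
  \<open>\<lambda>\<close>. Hence \<open>b(\<rho>) = \<lambda>\<close>.

  For a state \<open>\<xi>\<close>, the Hermitian operator \<open>\<rho> - \<xi>\<close> is traceless, so its trace norm is twice the
  sum of its positive eigenvalues and also minus twice the sum of the others. Each positive
  eigenvalue is at most the corresponding diagonal entry of \<open>\<rho>\<close>, and at least one diagonal
  entry, which is \<open>\<ge> \<lambda>\<close>, is left out; this gives \<open>\<parallel>\<rho> - \<xi>\<parallel> \<le> 2(1 - \<lambda>)\<close>. For \<open>\<xi> = |v\<rangle>\<langle>v|\<close> the
  expectation of \<open>\<rho> - \<xi>\<close> at \<open>v\<close> is \<open>\<lambda> - 1\<close>, which bounds the negative part from below, so the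
  bound is attained.

  The spectral theorem is proved along the way by minimising the quadratic form over unit
  vectors of an invariant subspace.\<close>

section \<open>The inner product on \<open>complex^'n\<close>\<close>

definition cinner :: "complex^'n \<Rightarrow> complex^'n \<Rightarrow> complex" where
  "cinner x y = (\<Sum>i\<in>UNIV. cnj (x$i) * y$i)"

lemma cinner_add_right: "cinner x (y + z) = cinner x y + cinner x z"
  by (simp add: cinner_def distrib_left sum.distrib)

lemma cinner_add_left: "cinner (x + y) z = cinner x z + cinner y z"
  by (simp add: cinner_def distrib_right sum.distrib)

lemma cinner_diff_right: "cinner x (y - z) = cinner x y - cinner x z"
  by (simp add: cinner_def right_diff_distrib sum_subtractf)

lemma cinner_diff_left: "cinner (x - y) z = cinner x z - cinner y z"
  by (simp add: cinner_def left_diff_distrib sum_subtractf)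

lemma cinner_smult_right: "cinner x (c *s y) = c * cinner x y"
  by (simp add: cinner_def sum_distrib_left algebra_simps)

lemma cinner_smult_left: "cinner (c *s x) y = cnj c * cinner x y"
  by (simp add: cinner_def sum_distrib_left algebra_simps)

lemma cinner_zero_right [simp]: "cinner x 0 = 0"
  by (simp add: cinner_def)

lemma cinner_zero_left [simp]: "cinner 0 x = 0"
  by (simp add: cinner_def)

lemma cinner_sum_right: "cinner x (\<Sum>i\<in>S. f i) = (\<Sum>i\<in>S. cinner x (f i))"
  by (induct S rule: infinite_finite_induct) (auto simp: cinner_add_right)

lemma cinner_sum_left: "cinner (\<Sum>i\<in>S. f i) x = (\<Sum>i\<in>S. cinner (f i) x)"
  by (induct S rule: infinite_finite_induct) (auto simp: cinner_add_left)

lemma cinner_commute: "cinner y x = cnj (cinner x y)"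
  by (simp add: cinner_def mult.commute)

lemma cinner_self: "cinner x x = of_real ((norm x)\<^sup>2)"
proof -
  have "cinner x x = (\<Sum>i\<in>UNIV. of_real ((norm (x$i))\<^sup>2))"
    unfolding cinner_def
    by (rule sum.cong) (auto, metis complex_norm_square mult.commute of_real_power)
  also have "\<dots> = of_real ((norm x)\<^sup>2)"
    by (simp add: norm_vec_def L2_set_def sum_nonneg)
  finally show ?thesis .
qed

lemma cinner_self_eq_0 [simp]: "cinner x x = 0 \<longleftrightarrow> x = 0"
  by (simp add: cinner_self)

lemma cinner_self_eq_1_iff: "cinner x x = 1 \<longleftrightarrow> norm x = 1"
proof -
  have "cinner x x = 1 \<longleftrightarrow> (norm x)\<^sup>2 = 1"
    by (metis cinner_self of_real_1 of_real_eq_iff)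
  also have "\<dots> \<longleftrightarrow> norm x = 1" by (smt (verit) norm_ge_zero power2_eq_1_iff)
  finally show ?thesis .
qed

lemma cinner_adjoint: "cinner x (A *v y) = cinner (cmat_adjoint A *v x) y"
  unfolding cinner_def cmat_adjoint_def matrix_vector_mult_def
  by (simp add: sum_distrib_left sum_distrib_right mult_ac) (rule sum.swap)

lemma cinner_hermitian: "cmat_hermitian A \<Longrightarrow> cinner x (A *v y) = cinner (A *v x) y"
  by (simp add: cinner_adjoint cmat_hermitian_def)

lemma cmat_hermitianI:
  assumes "\<And>x y. cinner x (M *v y) = cinner (M *v x) y"
  shows "cmat_hermitian M"
proof -
  have "cmat_adjoint M *v x = M *v x" for x
  proof -
    have "cinner (cmat_adjoint M *v x - M *v x) y = 0" for y
      using assms by (simp add: cinner_diff_left cinner_adjoint[symmetric])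
    from this[of "cmat_adjoint M *v x - M *v x"] show ?thesis by simp
  qed
  then show ?thesis unfolding cmat_hermitian_def matrix_eq by simp
qed

lemma cmat_hermitian_diff:
  "cmat_hermitian A \<Longrightarrow> cmat_hermitian B \<Longrightarrow> cmat_hermitian (A - B)"
  by (simp add: cmat_hermitian_def cmat_adjoint_def vec_eq_iff)

lemma cmat_psd_iff_cinner:
  "cmat_psd A \<longleftrightarrow> cmat_hermitian A \<and> (\<forall>x. 0 \<le> Re (cinner x (A *v x)))"
  by (simp add: cmat_psd_def cinner_def)

lemma scaleR_vec_eq_smult: "(c::real) *\<^sub>R (x::complex^'n) = complex_of_real c *s x"
  unfolding vec_eq_iff by (simp add: scaleR_conv_of_real[where 'a=complex])

lemma cinner_scaleR_right: "cinner x (c *\<^sub>R y) = of_real c * cinner x y"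
  by (simp add: scaleR_vec_eq_smult cinner_smult_right)

lemma cinner_scaleR_left: "cinner (c *\<^sub>R x) y = of_real c * cinner x y"
  by (simp add: scaleR_vec_eq_smult cinner_smult_left)

lemma vector_smult_sum: "(c::'a::semiring_1) *s (\<Sum>k\<in>S. f k) = (\<Sum>k\<in>S. c *s f k)"
  by (induct S rule: infinite_finite_induct) (auto simp: vector_add_ldistrib)

lemma matrix_vector_mult_smult: "(A::'a::comm_semiring_1^'n^'m) *v (c *s x) = c *s (A *v x)"
  by (simp add: matrix_vector_mult_def vec_eq_iff sum_distrib_left algebra_simps)

lemma matrix_vector_mult_scaleR_matrix: "(c *\<^sub>R (M::complex^'n^'n)) *v x = c *\<^sub>R (M *v x)"
  by (simp add: vec_eq_iff matrix_vector_mult_def scaleR_sum_right)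

lemma matrix_vector_mult_sum_vector: "(A::'a::semiring_1^'n^'m) *v (\<Sum>i\<in>S. f i) = (\<Sum>i\<in>S. A *v f i)"
  by (induct S rule: infinite_finite_induct) (auto simp: matrix_vector_right_distrib)

lemma matrix_vector_mult_sum_matrix: "(\<Sum>i\<in>S. M i) *v (x::'a::semiring_1^'n) = (\<Sum>i\<in>S. M i *v x)"
  by (induct S rule: infinite_finite_induct) (auto simp: matrix_vector_mult_add_rdistrib)

lemma trace_scaleR: "trace (c *\<^sub>R (A::'a::real_algebra_1^'n^'n)) = c *\<^sub>R trace A"
  by (simp add: trace_def scaleR_sum_right)

lemma Re_cinner_form_scaleR:
  "Re (cinner (c *\<^sub>R x) (A *v (c *\<^sub>R x))) = c\<^sup>2 * Re (cinner x (A *v x))"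
  by (simp add: scaleR_vec_eq_smult matrix_vector_mult_smult cinner_smult_left
      cinner_smult_right power2_eq_square)

lemma continuous_on_cinner_form: "continuous_on X (\<lambda>x. Re (cinner x ((A::complex^'n^'n) *v x)))"
  unfolding cinner_def matrix_vector_mult_def by (simp, intro continuous_intros)

definition orthonormal_on :: "'n set \<Rightarrow> ('n \<Rightarrow> complex^'n) \<Rightarrow> bool" where
  "orthonormal_on I u \<longleftrightarrow> (\<forall>i\<in>I. \<forall>j\<in>I. cinner (u i) (u j) = (if i = j then 1 else 0))"

abbreviation orthonormal :: "('n \<Rightarrow> complex^'n) \<Rightarrow> bool" where
  "orthonormal \<equiv> orthonormal_on UNIV"

lemma orthonormal_cinner: "orthonormal u \<Longrightarrow> cinner (u i) (u j) = (if i = j then 1 else 0)"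
  by (simp add: orthonormal_on_def)

lemma exists_nonzero_orthogonal:
  fixes u :: "'n \<Rightarrow> complex^'n"
  assumes "I \<noteq> UNIV"
  shows "\<exists>x. x \<noteq> 0 \<and> (\<forall>j\<in>I. cinner (u j) x = 0)"
proof (rule ccontr)
  assume H: "\<not> ?thesis"
  define L where "L x = (\<chi> k. if k \<in> I then cinner (u k) x else 0)" for x :: "complex^'n"
  have "linear L"
    by (rule linearI) (auto simp: L_def vec_eq_iff cinner_add_right cinner_scaleR_right
        scaleR_conv_of_real[where 'a=complex])
  moreover have "inj L"
  proof (rule injI)
    fix x y assume "L x = L y"
    then have "\<forall>j\<in>I. cinner (u j) (x - y) = 0"
      by (auto simp: L_def vec_eq_iff cinner_diff_right) (metis)
    with H have "x - y = 0" by blast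
    then show "x = y" by simp
  qed
  ultimately have "surj L" using linear_inj_imp_surj by blast
  obtain k where k: "k \<notin> I" using assms by auto
  obtain x where "axis k 1 = L x" using \<open>surj L\<close> by (metis surjD)
  then have "(axis k 1 :: complex^'n) $ k = L x $ k" by simp
  with k show False by (simp add: L_def axis_def)
qed

lemma orthonormal_orthogonal_eq_0:
  fixes u :: "'n \<Rightarrow> complex^'n"
  assumes u: "orthonormal u" and x: "\<And>j. cinner (u j) x = 0"
  shows "x = 0"
proof -
  define M where "M c = (\<Sum>k\<in>UNIV. (c $ k) *s u k)" for c :: "complex^'n"
  have coeff: "cinner (u j) (M c) = c $ j" for j c
    using u by (simp add: M_def cinner_sum_right cinner_smult_right orthonormal_cinner
        if_distrib sum.delta cong: if_cong)
  have "linear M"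
    by (rule linearI) (auto simp: M_def scaleR_vec_eq_smult vector_sadd_rdistrib sum.distrib
        vector_smult_assoc vector_smult_sum)
  moreover have "inj M"
    by (rule injI) (metis coeff vec_eq_iff)
  ultimately have "surj M" using linear_inj_imp_surj by blast
  then obtain c where c: "x = M c" by (metis surjD)
  have "c = 0" using x coeff c by (simp add: vec_eq_iff)
  then show ?thesis using c by (simp add: M_def)
qed

lemma orthonormal_expansion:
  assumes "orthonormal u" shows "x = (\<Sum>i\<in>UNIV. cinner (u i) x *s u i)"
proof -
  define z where "z = x - (\<Sum>i\<in>UNIV. cinner (u i) x *s u i)"
  have "cinner (u j) z = 0" for j
    using assms by (simp add: z_def cinner_diff_right cinner_sum_right cinner_smult_right
        orthonormal_cinner if_distrib sum.delta cong: if_cong)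
  then have "z = 0" using orthonormal_orthogonal_eq_0 assms by blast
  then show ?thesis by (simp add: z_def)
qed

lemma orthonormal_parseval:
  assumes "orthonormal u"
  shows "cinner x y = (\<Sum>i\<in>UNIV. cnj (cinner (u i) x) * cinner (u i) y)"
proof -
  have "cinner x y = cinner x (\<Sum>i\<in>UNIV. cinner (u i) y *s u i)"
    using orthonormal_expansion[OF assms] by metis
  also have "\<dots> = (\<Sum>i\<in>UNIV. cnj (cinner (u i) x) * cinner (u i) y)"
    by (simp add: cinner_sum_right cinner_smult_right cinner_commute[of x] mult.commute)
  finally show ?thesis .
qed

lemma mult_cnj_eq_cmod_sq: "z * cnj z = complex_of_real ((cmod z)\<^sup>2)"
  by (metis complex_norm_square of_real_power)

lemma orthonormal_norm_sq:
  assumes "orthonormal u" shows "(norm x)\<^sup>2 = (\<Sum>i\<in>UNIV. (cmod (cinner (u i) x))\<^sup>2)"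
proof -
  have "complex_of_real ((norm x)\<^sup>2) = (\<Sum>i\<in>UNIV. complex_of_real ((cmod (cinner (u i) x))\<^sup>2))"
    unfolding cinner_self[symmetric] orthonormal_parseval[OF assms, of x x]
    by (rule sum.cong) (simp_all only: mult.commute[of "cnj _"] mult_cnj_eq_cmod_sq)
  then show ?thesis by (metis of_real_eq_iff of_real_sum)
qed

lemma orthonormal_coeff_le_norm:
  assumes "orthonormal u" shows "(cmod (cinner (u i) x))\<^sup>2 \<le> (norm x)\<^sup>2"
  unfolding orthonormal_norm_sq[OF assms, of x] by (rule member_le_sum) auto

lemma orthonormal_norm_eq_1: "orthonormal u \<Longrightarrow> norm (u k) = 1"
  by (simp add: orthonormal_cinner flip: cinner_self_eq_1_iff)

lemma cinner_axis_left: "cinner (axis k 1) y = y $ k"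
  unfolding cinner_def axis_def
  by (simp add: if_distrib[of cnj] if_distrib[of "\<lambda>x. x * _"] cong: if_cong)

lemma cinner_axis_right: "cinner y (axis k 1) = cnj (y $ k)"
  unfolding cinner_def axis_def by (simp add: if_distrib[of "\<lambda>x. _ * x"] cong: if_cong)

lemma matrix_vector_mult_axis: "((M::complex^'n^'n) *v axis k 1) $ i = M $ i $ k"
  unfolding matrix_vector_mult_def axis_def by (simp add: if_distrib[of "\<lambda>x. _ * x"] cong: if_cong)

lemma trace_orthonormal:
  fixes M :: "complex^'n^'n"
  assumes "orthonormal u" shows "trace M = (\<Sum>i\<in>UNIV. cinner (u i) (M *v u i))"
proof -
  define e where "e k = (axis k 1 :: complex^'n)" for k
  have diag: "M $ k $ k = cinner (e k) (M *v e k)" for k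
    by (simp add: e_def cinner_axis_left matrix_vector_mult_axis)
  have c1: "cinner (u i) (e k) = cnj (u i $ k)" for i k
    by (simp add: e_def cinner_axis_right)
  have c2: "cinner (u i) (M *v e k) = cnj ((cmat_adjoint M *v u i) $ k)" for i k
    unfolding cinner_adjoint by (simp add: e_def cinner_axis_right)
  have "trace M = (\<Sum>k\<in>UNIV. \<Sum>i\<in>UNIV. u i $ k * cnj ((cmat_adjoint M *v u i) $ k))"
    unfolding trace_def diag orthonormal_parseval[OF assms, of "e _"] c1 c2 by simp
  also have "\<dots> = (\<Sum>i\<in>UNIV. cinner (cmat_adjoint M *v u i) (u i))"
    by (subst sum.swap) (simp add: cinner_def mult.commute)
  also have "\<dots> = (\<Sum>i\<in>UNIV. cinner (u i) (M *v u i))"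
    by (simp add: cinner_adjoint)
  finally show ?thesis .
qed

section \<open>The spectral theorem for Hermitian matrices\<close>

lemma linear_plus_quadratic_nonneg_imp_eq_0:
  fixes a c :: real
  assumes nonneg: "\<And>s. 0 \<le> a * s + c * s\<^sup>2"
  shows "a = 0"
proof (rule ccontr)
  assume "a \<noteq> 0"
  define k where "k = \<bar>c\<bar> + 1"
  have k: "k > 0" "c \<le> k - 1" by (auto simp: k_def)
  have "a * (- a / k) + c * (- a / k)\<^sup>2 \<le> a * (- a / k) + (k - 1) * (- a / k)\<^sup>2"
    using k by (intro add_left_mono mult_right_mono) auto
  also have "\<dots> = - a\<^sup>2 / k\<^sup>2"
    using k by (simp add: field_simps power2_eq_square)
  also have "\<dots> < 0" using \<open>a \<noteq> 0\<close> k by simp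
  finally show False using nonneg[of "- a / k"] by simp
qed

text \<open>The zero of a quadratic form that is nonnegative on an invariant subspace lies in the
  kernel: perturbing \<open>w\<close> along \<open>B w\<close> would otherwise make the form negative.\<close>

lemma hermitian_form_zero_imp_kernel:
  fixes B :: "complex^'n^'n"
  assumes herm: "cmat_hermitian B" and W: "subspace W" and inv: "\<And>x. x \<in> W \<Longrightarrow> B *v x \<in> W"
    and nonneg: "\<And>x. x \<in> W \<Longrightarrow> 0 \<le> Re (cinner x (B *v x))"
    and w: "w \<in> W" and zero: "Re (cinner w (B *v w)) = 0"
  shows "B *v w = 0"
proof -
  define y where "y = B *v w"
  have "0 \<le> 2 * (norm y)\<^sup>2 * s + Re (cinner y (B *v y)) * s\<^sup>2" for s
  proof -
    have "w + s *\<^sub>R y \<in> W" using W w inv by (simp add: y_def subspace_add subspace_mul)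
    then have "0 \<le> Re (cinner (w + s *\<^sub>R y) (B *v (w + s *\<^sub>R y)))" by (rule nonneg)
    also have "cinner (w + s *\<^sub>R y) (B *v (w + s *\<^sub>R y))
      = cinner w (B *v w) + of_real s * cinner (B *v w) y + of_real s * cinner y (B *v w)
        + of_real s * of_real s * cinner y (B *v y)"
      by (simp add: matrix_vector_right_distrib scaleR_vec_eq_smult matrix_vector_mult_smult
          cinner_add_left cinner_add_right cinner_smult_left cinner_smult_right
          cinner_hermitian[OF herm, of w] algebra_simps)
    finally show ?thesis
      using zero by (simp add: y_def cinner_self power2_eq_square algebra_simps)
  qed
  then have "2 * (norm y)\<^sup>2 = 0" by (rule linear_plus_quadratic_nonneg_imp_eq_0)
  then show ?thesis by (simp add: y_def)
qed

lemma exists_form_minimiser_on_subspace: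
  fixes A :: "complex^'n^'n"
  assumes W: "subspace W" and nontrivial: "W \<noteq> {0}"
  obtains w where "w \<in> W" "norm w = 1"
    "\<And>x. x \<in> W \<Longrightarrow> Re (cinner w (A *v w)) * (norm x)\<^sup>2 \<le> Re (cinner x (A *v x))"
proof -
  define S where "S = W \<inter> sphere 0 1"
  have normalise: "(1 / norm x) *\<^sub>R x \<in> S" if "x \<in> W" "x \<noteq> 0" for x
    using that W by (simp add: S_def subspace_mul)
  have "compact S"
    unfolding S_def using closed_subspace[OF W] by (simp add: closed_Int_compact)
  moreover obtain x where "x \<in> W" "x \<noteq> 0" using nontrivial subspace_0[OF W] by blast
  then have "S \<noteq> {}" using normalise by blast
  ultimately obtain w where w: "w \<in> S"
    and min: "\<And>y. y \<in> S \<Longrightarrow> Re (cinner w (A *v w)) \<le> Re (cinner y (A *v y))"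
    using continuous_attains_inf[OF _ _ continuous_on_cinner_form] by metis
  have "Re (cinner w (A *v w)) * (norm x)\<^sup>2 \<le> Re (cinner x (A *v x))" if "x \<in> W" for x
  proof (cases "x = 0")
    case False
    have "Re (cinner w (A *v w)) \<le> (1 / norm x)\<^sup>2 * Re (cinner x (A *v x))"
      using min[OF normalise[OF that False]] by (simp only: Re_cinner_form_scaleR)
    then show ?thesis using False by (simp add: field_simps)
  qed simp
  moreover have "w \<in> W" "norm w = 1" using w by (auto simp: S_def)
  ultimately show ?thesis using that by blast
qed

lemma hermitian_eigenvector_in_invariant_subspace:
  fixes A :: "complex^'n^'n"
  assumes herm: "cmat_hermitian A" and W: "subspace W" "W \<noteq> {0}"
    and inv: "\<And>x. x \<in> W \<Longrightarrow> A *v x \<in> W"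
  obtains w \<mu> where "w \<in> W" "cinner w w = 1" "A *v w = complex_of_real \<mu> *s w"
proof -
  obtain w where w: "w \<in> W" "norm w = 1"
    and min: "\<And>x. x \<in> W \<Longrightarrow> Re (cinner w (A *v w)) * (norm x)\<^sup>2 \<le> Re (cinner x (A *v x))"
    using exists_form_minimiser_on_subspace[OF W] by blast
  define \<mu> where "\<mu> = Re (cinner w (A *v w))"
  define B where "B = A - \<mu> *\<^sub>R mat 1"
  have B: "B *v x = A *v x - \<mu> *\<^sub>R x" for x
    by (simp add: B_def matrix_vector_mult_diff_rdistrib matrix_vector_mult_scaleR_matrix)
  have "B *v w = 0"
  proof (rule hermitian_form_zero_imp_kernel[OF _ W(1) _ _ w(1)])
    show "cmat_hermitian B"
      by (rule cmat_hermitianI)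
        (simp add: B cinner_diff_left cinner_diff_right cinner_scaleR_left cinner_scaleR_right
          cinner_hermitian[OF herm])
    show "B *v x \<in> W" if "x \<in> W" for x
      using that inv W by (simp add: B subspace_diff subspace_mul)
    show "0 \<le> Re (cinner x (B *v x))" if "x \<in> W" for x
      using min[OF that] by (simp add: B \<mu>_def cinner_diff_right cinner_scaleR_right cinner_self)
    show "Re (cinner w (B *v w)) = 0"
      using w by (simp add: B \<mu>_def cinner_diff_right cinner_scaleR_right cinner_self)
  qed
  then have "A *v w = complex_of_real \<mu> *s w" by (simp add: B scaleR_vec_eq_smult)
  moreover have "cinner w w = 1" using w by (simp add: cinner_self)
  ultimately show ?thesis using that w by blast
qed

lemma hermitian_orthonormal_eigenvectors_on:
  fixes A :: "complex^'n^'n"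
  assumes herm: "cmat_hermitian A"
  shows "\<exists>u d. orthonormal_on I u \<and> (\<forall>i\<in>I. A *v u i = complex_of_real (d i) *s u i)"
proof (induct I rule: finite_induct[OF finite])
  case 1 then show ?case by (simp add: orthonormal_on_def)
next
  case (2 i I)
  then obtain u d where u: "orthonormal_on I u" and d: "\<forall>j\<in>I. A *v u j = complex_of_real (d j) *s u j"
    by blast
  define W where "W = {x. \<forall>j\<in>I. cinner (u j) x = 0}"
  have "subspace W"
    by (rule subspaceI) (auto simp: W_def cinner_add_right cinner_scaleR_right)
  moreover have "W \<noteq> {0}"
    using exists_nonzero_orthogonal[of I u] 2(2) by (auto simp: W_def)
  moreover have "A *v x \<in> W" if "x \<in> W" for x
    using that d by (simp add: W_def cinner_hermitian[OF herm] cinner_smult_left)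
  ultimately obtain w \<mu> where w: "w \<in> W" "cinner w w = 1" "A *v w = complex_of_real \<mu> *s w"
    using hermitian_eigenvector_in_invariant_subspace[OF herm] by blast
  have "\<forall>j\<in>I. cinner w (u j) = 0"
    using w(1) by (metis (mono_tags) W_def cinner_commute complex_cnj_zero mem_Collect_eq)
  then have "orthonormal_on (insert i I) (u(i := w))"
    using u w(1,2) 2(2) by (auto simp: orthonormal_on_def W_def)
  moreover have "\<forall>j\<in>insert i I. A *v (u(i := w)) j = complex_of_real ((d(i := \<mu>)) j) *s (u(i := w)) j"
    using d w(3) 2(2) by auto
  ultimately show ?case by blast
qed

definition eigenbasis :: "complex^'n^'n \<Rightarrow> ('n \<Rightarrow> complex^'n) \<Rightarrow> ('n \<Rightarrow> real) \<Rightarrow> bool" where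
  "eigenbasis A u d \<longleftrightarrow> orthonormal u \<and> (\<forall>i. A *v u i = complex_of_real (d i) *s u i)"

theorem hermitian_eigenbasis:
  "cmat_hermitian A \<Longrightarrow> \<exists>u d. eigenbasis A u d"
  using hermitian_orthonormal_eigenvectors_on[of A UNIV] by (simp add: eigenbasis_def)

lemma eigenbasis_apply:
  assumes "eigenbasis A u d"
  shows "A *v x = (\<Sum>i\<in>UNIV. (complex_of_real (d i) * cinner (u i) x) *s u i)"
proof -
  have "A *v x = A *v (\<Sum>i\<in>UNIV. cinner (u i) x *s u i)"
    using orthonormal_expansion assms by (metis eigenbasis_def)
  also have "\<dots> = (\<Sum>i\<in>UNIV. (complex_of_real (d i) * cinner (u i) x) *s u i)"
    using assms by (simp add: eigenbasis_def matrix_vector_mult_sum_vector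
        matrix_vector_mult_smult vector_smult_assoc mult.commute)
  finally show ?thesis .
qed

lemma eigenbasis_form:
  assumes "eigenbasis A u d"
  shows "Re (cinner x (A *v x)) = (\<Sum>i\<in>UNIV. d i * (cmod (cinner (u i) x))\<^sup>2)"
proof -
  have "cinner x (A *v x) = (\<Sum>i\<in>UNIV. complex_of_real (d i * (cmod (cinner (u i) x))\<^sup>2))"
    unfolding eigenbasis_apply[OF assms]
    by (simp add: cinner_sum_right cinner_smult_right cinner_commute[of x] mult.assoc
        mult_cnj_eq_cmod_sq)
  then show ?thesis by (metis Re_complex_of_real of_real_sum)
qed

lemma eigenbasis_eigenvalue: "eigenbasis A u d \<Longrightarrow> cinner (u i) (A *v u i) = complex_of_real (d i)"
  by (simp add: eigenbasis_def cinner_smult_right orthonormal_cinner)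

lemma eigenbasis_trace:
  assumes "eigenbasis A u d" shows "trace A = complex_of_real (\<Sum>i\<in>UNIV. d i)"
  using assms trace_orthonormal[of u A] eigenbasis_eigenvalue[OF assms] by (simp add: eigenbasis_def)

lemma eigenbasis_unique: "eigenbasis A u d \<Longrightarrow> eigenbasis B u d \<Longrightarrow> A = B"
  unfolding matrix_eq by (simp add: eigenbasis_apply)

lemma eigenbasis_mult:
  "eigenbasis A u a \<Longrightarrow> eigenbasis B u b \<Longrightarrow> eigenbasis (A ** B) u (\<lambda>i. a i * b i)"
  by (simp add: eigenbasis_def matrix_vector_mul_assoc[symmetric] matrix_vector_mult_smult
      vector_smult_assoc mult.commute)

lemma eigenbasis_hermitian:
  assumes "eigenbasis A u d" shows "cmat_hermitian A"
proof (rule cmat_hermitianI)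
  show "cinner x (A *v y) = cinner (A *v x) y" for x y
    by (simp add: eigenbasis_apply[OF assms] cinner_sum_left cinner_sum_right cinner_smult_left
        cinner_smult_right cinner_commute[of x] mult_ac)
qed

lemma eigenbasis_psd: "eigenbasis A u d \<Longrightarrow> (\<And>i. 0 \<le> d i) \<Longrightarrow> cmat_psd A"
  by (simp add: cmat_psd_iff_cinner eigenbasis_hermitian eigenbasis_form sum_nonneg)

lemma psd_eigenvalue_nonneg: "cmat_psd A \<Longrightarrow> eigenbasis A u d \<Longrightarrow> 0 \<le> d i"
  by (metis Re_complex_of_real cmat_psd_iff_cinner eigenbasis_eigenvalue)

lemma eigenbasis_min_form:
  assumes "eigenbasis A u d"
  shows "Min (range d) * (norm x)\<^sup>2 \<le> Re (cinner x (A *v x))"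
proof -
  have "Min (range d) * (norm x)\<^sup>2 = (\<Sum>i\<in>UNIV. Min (range d) * (cmod (cinner (u i) x))\<^sup>2)"
    using assms orthonormal_norm_sq[of u x] by (simp add: eigenbasis_def sum_distrib_left)
  also have "\<dots> \<le> (\<Sum>i\<in>UNIV. d i * (cmod (cinner (u i) x))\<^sup>2)"
    by (intro sum_mono mult_right_mono) auto
  finally show ?thesis by (simp only: eigenbasis_form[OF assms])
qed

lemma eigenbasis_min_eigenvector:
  assumes ud: "eigenbasis A u d"
  obtains v where "cinner v v = 1" "norm v = 1" "Re (cinner v (A *v v)) = Min (range d)"
proof -
  have "Min (range d) \<in> range d" by (rule Min_in) auto
  then obtain i where i: "d i = Min (range d)" by (metis rangeE)
  show ?thesis
  proof
    show "cinner (u i) (u i) = 1" "norm (u i) = 1"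
      using ud orthonormal_norm_eq_1 by (auto simp: eigenbasis_def orthonormal_cinner)
    show "Re (cinner (u i) (A *v u i)) = Min (range d)"
      using i by (simp add: eigenbasis_eigenvalue[OF ud])
  qed
qed

definition outer :: "complex^'n \<Rightarrow> complex^'n \<Rightarrow> complex^'n^'n" where
  "outer a b = (\<chi> i j. a $ i * cnj (b $ j))"

lemma outer_mult_vector: "outer a b *v x = cinner b x *s a"
  by (simp add: vec_eq_iff matrix_vector_mult_def outer_def cinner_def sum_distrib_left mult_ac)

definition spectral_matrix :: "('n \<Rightarrow> complex^'n) \<Rightarrow> ('n \<Rightarrow> real) \<Rightarrow> complex^'n^'n" where
  "spectral_matrix u f = (\<Sum>i\<in>UNIV. f i *\<^sub>R outer (u i) (u i))"

lemma eigenbasis_spectral_matrix: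
  assumes "orthonormal u" shows "eigenbasis (spectral_matrix u f) u f"
proof -
  have "spectral_matrix u f *v u i = (\<Sum>j\<in>UNIV. if j = i then complex_of_real (f j) *s u j else 0)" for i
    unfolding spectral_matrix_def matrix_vector_mult_sum_matrix
    by (rule sum.cong) (simp_all add: matrix_vector_mult_scaleR_matrix outer_mult_vector
        scaleR_vec_eq_smult orthonormal_cinner[OF assms])
  then show ?thesis using assms by (simp add: eigenbasis_def)
qed

section \<open>Positive square roots and the trace norm\<close>

lemma psd_form_zero_imp_kernel:
  "cmat_psd P \<Longrightarrow> Re (cinner x (P *v x)) = 0 \<Longrightarrow> P *v x = 0"
  by (rule hermitian_form_zero_imp_kernel[of _ UNIV]) (auto simp: cmat_psd_iff_cinner)

text \<open>If \<open>P\<^sup>2 = Q\<^sup>2\<close> and \<open>(P - Q) x = \<mu> x\<close> with \<open>\<mu> \<noteq> 0\<close>, then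
  \<open>0 = \<langle>x, P(P - Q)x\<rangle> + \<langle>x, (P - Q)Qx\<rangle> = \<mu> (\<langle>x, Px\<rangle> + \<langle>x, Qx\<rangle>)\<close>, forcing \<open>Px = Qx = 0\<close>.\<close>

lemma psd_sqrt_unique:
  fixes P Q :: "complex^'n^'n"
  assumes P: "cmat_psd P" and Q: "cmat_psd Q" and sq: "P ** P = Q ** Q"
  shows "P = Q"
proof -
  have herm: "cmat_hermitian (P - Q)"
    using P Q by (simp add: cmat_psd_iff_cinner cmat_hermitian_diff)
  then obtain w \<mu> where w: "eigenbasis (P - Q) w \<mu>" using hermitian_eigenbasis by blast
  have "\<mu> i = 0" for i
  proof (rule ccontr)
    assume nz: "\<mu> i \<noteq> 0"
    define x where "x = w i"
    have Dx: "(P - Q) *v x = complex_of_real (\<mu> i) *s x"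
      using w by (simp add: x_def eigenbasis_def)
    have "P *v (P *v x) = Q *v (Q *v x)" using sq by (simp add: matrix_vector_mul_assoc)
    then have "P *v ((P - Q) *v x) + (P - Q) *v (Q *v x) = 0"
      by (simp add: matrix_vector_mult_diff_distrib matrix_vector_mult_diff_rdistrib)
    then have "cinner x (P *v ((P - Q) *v x)) + cinner ((P - Q) *v x) (Q *v x) = 0"
      by (metis cinner_add_right cinner_zero_right cinner_hermitian[OF herm])
    then have "complex_of_real (\<mu> i) * (cinner x (P *v x) + cinner x (Q *v x)) = 0"
      by (simp only: Dx matrix_vector_mult_smult cinner_smult_right cinner_smult_left
          complex_cnj_complex_of_real distrib_left)
    then have "Re (cinner x (P *v x) + cinner x (Q *v x)) = 0" using nz by simp
    then have "Re (cinner x (P *v x)) + Re (cinner x (Q *v x)) = 0" by simp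
    moreover have "0 \<le> Re (cinner x (P *v x))" "0 \<le> Re (cinner x (Q *v x))"
      using P Q by (auto simp: cmat_psd_iff_cinner)
    ultimately have "P *v x = 0" "Q *v x = 0"
      using psd_form_zero_imp_kernel[OF P, of x] psd_form_zero_imp_kernel[OF Q, of x] by auto
    then have "x = 0" using Dx nz by (simp add: matrix_vector_mult_diff_rdistrib)
    then show False using w orthonormal_norm_eq_1[of w i] by (simp add: x_def eigenbasis_def)
  qed
  then have "P - Q = 0" unfolding matrix_eq using eigenbasis_apply[OF w] by simp
  then show ?thesis by simp
qed

lemma trace_norm_eigenbasis:
  assumes H: "eigenbasis H u d"
  shows "trace_norm H = (\<Sum>i\<in>UNIV. \<bar>d i\<bar>)"
proof -
  have u: "orthonormal u" using H by (simp add: eigenbasis_def)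
  define P where "P = spectral_matrix u (\<lambda>i. \<bar>d i\<bar>)"
  have P: "eigenbasis P u (\<lambda>i. \<bar>d i\<bar>)" unfolding P_def by (rule eigenbasis_spectral_matrix[OF u])
  have "eigenbasis (P ** P) u (\<lambda>i. d i * d i)"
    using eigenbasis_mult[OF P P] by (simp add: abs_mult_self_eq)
  then have sq: "P ** P = cmat_adjoint H ** H"
    using eigenbasis_unique eigenbasis_mult[OF H H] eigenbasis_hermitian[OF H]
    by (metis cmat_hermitian_def)
  have psd: "cmat_psd P" using P by (rule eigenbasis_psd) simp
  have "cmat_abs H = P"
    unfolding cmat_abs_def
  proof (rule the_equality)
    show "cmat_psd P \<and> P ** P = cmat_adjoint H ** H" using psd sq by simp
    show "Q = P" if "cmat_psd Q \<and> Q ** Q = cmat_adjoint H ** H" for Q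
      using that psd sq psd_sqrt_unique by metis
  qed
  then show ?thesis unfolding trace_norm_def using eigenbasis_trace[OF P] by simp
qed

lemma density_eigenbasis:
  assumes "density \<rho>"
  obtains u d where "eigenbasis \<rho> u d" "\<And>i. 0 \<le> d i" "(\<Sum>i\<in>UNIV. d i) = 1"
proof -
  have psd: "cmat_psd \<rho>" and tr: "trace \<rho> = 1" using assms by (auto simp: density_def)
  then have "cmat_hermitian \<rho>" by (simp add: cmat_psd_iff_cinner)
  then obtain u d where ud: "eigenbasis \<rho> u d" using hermitian_eigenbasis by blast
  have "complex_of_real (\<Sum>i\<in>UNIV. d i) = of_real 1" using eigenbasis_trace[OF ud] tr by simp
  then have "(\<Sum>i\<in>UNIV. d i) = 1" by (simp only: of_real_eq_iff)
  then show ?thesis using that ud psd_eigenvalue_nonneg[OF psd ud] by blast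
qed

lemma density_form_le_norm:
  assumes "density \<rho>" shows "Re (cinner y (\<rho> *v y)) \<le> (norm y)\<^sup>2"
proof -
  obtain u d where ud: "eigenbasis \<rho> u d" and nonneg: "\<And>i. 0 \<le> d i"
    and sum: "(\<Sum>i\<in>UNIV. d i) = 1"
    using density_eigenbasis[OF assms] by blast
  have "Re (cinner y (\<rho> *v y)) = (\<Sum>i\<in>UNIV. d i * (cmod (cinner (u i) y))\<^sup>2)"
    by (rule eigenbasis_form[OF ud])
  also have "\<dots> \<le> (\<Sum>i\<in>UNIV. d i * (norm y)\<^sup>2)"
    using ud nonneg orthonormal_coeff_le_norm
    by (intro sum_mono mult_left_mono) (auto simp: eigenbasis_def)
  also have "\<dots> = (norm y)\<^sup>2" using sum by (simp add: sum_distrib_right[symmetric])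
  finally show ?thesis .
qed

lemma density_outer:
  assumes "cinner v v = 1" shows "density (outer v v)"
proof -
  have "cmat_hermitian (outer v v)"
    by (rule cmat_hermitianI)
      (simp add: outer_mult_vector cinner_smult_right cinner_smult_left cinner_commute[of v] mult.commute)
  moreover have "cinner y (outer v v *v y) = complex_of_real ((cmod (cinner v y))\<^sup>2)" for y
    by (simp add: outer_mult_vector cinner_smult_right cinner_commute[of y v] mult_cnj_eq_cmod_sq
        mult.commute)
  moreover have "trace (outer v v) = cinner v v"
    by (simp add: trace_def outer_def cinner_def mult.commute)
  ultimately show ?thesis using assms by (simp add: density_def cmat_psd_iff_cinner)
qed

lemma density_rescaled_diff_iff:
  assumes \<rho>: "density \<rho>" and \<xi>: "density \<xi>" and t: "t < 1"
  shows "density ((1 / (1 - t)) *\<^sub>R (\<rho> - t *\<^sub>R \<xi>)) \<longleftrightarrow>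
    (\<forall>y. t * Re (cinner y (\<xi> *v y)) \<le> Re (cinner y (\<rho> *v y)))"
proof -
  define M where "M = (1 / (1 - t)) *\<^sub>R (\<rho> - t *\<^sub>R \<xi>)"
  have "cmat_hermitian M"
    using \<rho> \<xi> by (simp add: M_def density_def cmat_psd_iff_cinner cmat_hermitian_def
        cmat_adjoint_def vec_eq_iff)
  moreover have "trace M = 1"
  proof -
    have "trace M = (1 / (1 - t)) *\<^sub>R (trace \<rho> - t *\<^sub>R trace \<xi>)"
      by (simp add: M_def trace_scaleR trace_sub)
    also have "\<dots> = (1 / (1 - t)) *\<^sub>R ((1 - t) *\<^sub>R (1::complex))"
      using \<rho> \<xi> by (simp add: density_def scaleR_diff_left)
    finally show ?thesis using t by simp
  qed
  moreover have "0 \<le> Re (cinner y (M *v y)) \<longleftrightarrow> t * Re (cinner y (\<xi> *v y)) \<le> Re (cinner y (\<rho> *v y))"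
    for y
    using t by (simp add: M_def matrix_vector_mult_scaleR_matrix matrix_vector_mult_diff_rdistrib
        cinner_scaleR_right cinner_diff_right zero_le_divide_iff)
  ultimately show ?thesis by (simp add: M_def[symmetric] density_def cmat_psd_iff_cinner)
qed

section \<open>Boundariness is the smallest eigenvalue\<close>

lemma weight_ge:
  assumes \<rho>: "density \<rho>" and \<xi>: "density \<xi>" and m: "0 \<le> m" "m \<le> 1"
    and bound: "\<And>y. m * (norm y)\<^sup>2 \<le> Re (cinner y (\<rho> *v y))"
  shows "m \<le> weight \<rho> \<xi>"
proof -
  define T where "T = {t::real. 0 \<le> t \<and> t < 1 \<and> density ((1 / (1 - t)) *\<^sub>R (\<rho> - t *\<^sub>R \<xi>))}"
  have T: "t \<in> T" if "0 \<le> t" "t \<le> m" "t < 1" for t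
  proof -
    have "t * Re (cinner y (\<xi> *v y)) \<le> Re (cinner y (\<rho> *v y))" for y
    proof -
      have "t * Re (cinner y (\<xi> *v y)) \<le> m * (norm y)\<^sup>2"
        using density_form_le_norm[OF \<xi>, of y] that \<xi>
        by (intro mult_mono) (auto simp: density_def cmat_psd_iff_cinner)
      then show ?thesis using bound[of y] by linarith
    qed
    then show ?thesis using that density_rescaled_diff_iff[OF \<rho> \<xi>] by (simp add: T_def)
  qed
  have bdd: "bdd_above T" by (rule bdd_aboveI[of _ 1]) (auto simp: T_def)
  show ?thesis
  proof (cases "m < 1")
    case True
    then show ?thesis unfolding weight_def T_def[symmetric] using T m cSup_upper[OF _ bdd] by auto
  next
    case False
    \<comment> \<open>\<open>t = 1\<close> is excluded from the defining set, so \<open>m = 1\<close> is only reached as a supremum\<close>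
    then have "m = 1" using m by simp
    show ?thesis unfolding weight_def T_def[symmetric] \<open>m = 1\<close>
      by (rule dense_le_bounded[of 0]) (use T \<open>m = 1\<close> cSup_upper[OF _ bdd] in auto)
  qed
qed

lemma weight_outer_le:
  assumes \<rho>: "density \<rho>" and v: "cinner v v = 1"
  shows "weight \<rho> (outer v v) \<le> Re (cinner v (\<rho> *v v))"
  unfolding weight_def
proof (rule cSup_least)
  have "0 \<in> {t. 0 \<le> t \<and> t < 1 \<and> density ((1 / (1 - t)) *\<^sub>R (\<rho> - t *\<^sub>R outer v v))}"
    using \<rho> by simp
  then show "{t. 0 \<le> t \<and> t < 1 \<and> density ((1 / (1 - t)) *\<^sub>R (\<rho> - t *\<^sub>R outer v v))} \<noteq> {}"
    by blast
  fix t assume "t \<in> {t. 0 \<le> t \<and> t < 1 \<and> density ((1 / (1 - t)) *\<^sub>R (\<rho> - t *\<^sub>R outer v v))}"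
  then have "t * Re (cinner v (outer v v *v v)) \<le> Re (cinner v (\<rho> *v v))"
    using density_rescaled_diff_iff[OF \<rho> density_outer[OF v]] by blast
  then show "t \<le> Re (cinner v (\<rho> *v v))" using v by (simp add: outer_mult_vector cinner_smult_right)
qed

lemma boundariness_eq_min_eigenvalue:
  assumes \<rho>: "density \<rho>" and ud: "eigenbasis \<rho> u d"
  shows "boundariness \<rho> = Min (range d)"
proof -
  obtain v where v: "cinner v v = 1" "norm v = 1"
    and form: "Re (cinner v (\<rho> *v v)) = Min (range d)"
    using eigenbasis_min_eigenvector[OF ud] by blast
  have "0 \<le> Min (range d)"
    using \<rho> form by (metis density_def cmat_psd_iff_cinner)
  moreover have "Min (range d) \<le> 1"
    using form density_form_le_norm[OF \<rho>, of v] v by simp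
  ultimately have lower: "\<And>\<xi>. density \<xi> \<Longrightarrow> Min (range d) \<le> weight \<rho> \<xi>"
    using weight_ge[OF \<rho>] eigenbasis_min_form[OF ud] by blast
  have "weight \<rho> (outer v v) = Min (range d)"
    using weight_outer_le[OF \<rho> v(1)] lower[OF density_outer[OF v(1)]] unfolding form
    by (rule order.antisym)
  then have "Min (range d) \<in> weight \<rho> ` {\<xi>. density \<xi>}"
    using density_outer[OF v(1)] by (metis imageI mem_Collect_eq)
  then show ?thesis
    unfolding boundariness_def using lower by (intro cInf_eq_minimum) auto
qed

section \<open>Trace distance to the other states\<close>

lemma sum_abs_eq_if_sum_eq_0:
  fixes \<mu> :: "'a::finite \<Rightarrow> real"
  assumes sum: "(\<Sum>i\<in>UNIV. \<mu> i) = 0"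
  shows "(\<Sum>i\<in>UNIV. \<bar>\<mu> i\<bar>) = 2 * (\<Sum>i | 0 < \<mu> i. \<mu> i)"
    and "(\<Sum>i\<in>UNIV. \<bar>\<mu> i\<bar>) = - 2 * (\<Sum>i | \<mu> i \<le> 0. \<mu> i)"
proof -
  have split: "(\<Sum>i\<in>UNIV. f i) = (\<Sum>i | 0 < \<mu> i. f i) + (\<Sum>i | \<mu> i \<le> 0. f i)" for f :: "'a \<Rightarrow> real"
    by (subst sum.union_disjoint[symmetric]) (auto intro: sum.cong)
  have "(\<Sum>i | 0 < \<mu> i. \<bar>\<mu> i\<bar>) = (\<Sum>i | 0 < \<mu> i. \<mu> i)" by (rule sum.cong) auto
  moreover have "(\<Sum>i | \<mu> i \<le> 0. \<bar>\<mu> i\<bar>) = - (\<Sum>i | \<mu> i \<le> 0. \<mu> i)"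
    by (subst sum_negf[symmetric], rule sum.cong) auto
  ultimately show "(\<Sum>i\<in>UNIV. \<bar>\<mu> i\<bar>) = 2 * (\<Sum>i | 0 < \<mu> i. \<mu> i)"
    and "(\<Sum>i\<in>UNIV. \<bar>\<mu> i\<bar>) = - 2 * (\<Sum>i | \<mu> i \<le> 0. \<mu> i)"
    using sum split[of \<mu>] split[of "\<lambda>i. \<bar>\<mu> i\<bar>"] by linarith+
qed

lemma density_diff_eigenbasis:
  assumes \<rho>: "density \<rho>" and \<xi>: "density \<xi>"
  obtains w \<mu> where "eigenbasis (\<rho> - \<xi>) w \<mu>" "(\<Sum>i\<in>UNIV. \<mu> i) = 0"
proof -
  have "cmat_hermitian (\<rho> - \<xi>)"
    using \<rho> \<xi> by (simp add: density_def cmat_psd_iff_cinner cmat_hermitian_diff)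
  then obtain w \<mu> where w\<mu>: "eigenbasis (\<rho> - \<xi>) w \<mu>" using hermitian_eigenbasis by blast
  have "complex_of_real (\<Sum>i\<in>UNIV. \<mu> i) = of_real 0"
    using eigenbasis_trace[OF w\<mu>] \<rho> \<xi> by (simp add: density_def trace_sub)
  then show ?thesis using that w\<mu> by (simp only: of_real_eq_iff)
qed

text \<open>Each positive eigenvalue of \<open>\<rho> - \<xi>\<close> is at most the diagonal entry of \<open>\<rho>\<close> in its
  eigenvector, and not all eigenvalues are positive, so some diagonal entry (at least \<open>m\<close>)
  is left out of the sum.\<close>

lemma trace_norm_diff_density_le:
  assumes \<rho>: "density \<rho>" and \<xi>: "density \<xi>"
    and bound: "\<And>y. m * (norm y)\<^sup>2 \<le> Re (cinner y (\<rho> *v y))"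
  shows "trace_norm (\<rho> - \<xi>) \<le> 2 * (1 - m)"
proof -
  obtain w \<mu> where w\<mu>: "eigenbasis (\<rho> - \<xi>) w \<mu>" and sum: "(\<Sum>i\<in>UNIV. \<mu> i) = 0"
    using density_diff_eigenbasis[OF \<rho> \<xi>] by blast
  have w: "orthonormal w" using w\<mu> by (simp add: eigenbasis_def)
  define r where "r i = Re (cinner (w i) (\<rho> *v w i))" for i
  have r_nonneg: "0 \<le> r i" for i using \<rho> by (simp add: r_def density_def cmat_psd_iff_cinner)
  have "Re (trace \<rho>) = (\<Sum>i\<in>UNIV. r i)" by (simp add: r_def trace_orthonormal[OF w])
  then have r_sum: "(\<Sum>i\<in>UNIV. r i) = 1" using \<rho> by (simp add: density_def)
  have \<mu>_le: "\<mu> i \<le> r i" for i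
  proof -
    have "\<mu> i = r i - Re (cinner (w i) (\<xi> *v w i))"
      using eigenbasis_eigenvalue[OF w\<mu>, of i]
      by (simp add: r_def matrix_vector_mult_diff_rdistrib cinner_diff_right)
         (metis Re_complex_of_real minus_complex.sel(1))
    then show ?thesis using \<xi> by (simp add: density_def cmat_psd_iff_cinner)
  qed
  have "{i. 0 < \<mu> i} \<noteq> UNIV"
    using sum sum_pos[of UNIV \<mu>] by force
  then obtain k where k: "\<not> 0 < \<mu> k" by auto
  have "(\<Sum>i | 0 < \<mu> i. \<mu> i) \<le> (\<Sum>i | 0 < \<mu> i. r i)" by (rule sum_mono) (rule \<mu>_le)
  also have "\<dots> \<le> (\<Sum>i\<in>UNIV - {k}. r i)" by (rule sum_mono2) (use k r_nonneg in auto)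
  also have "\<dots> = 1 - r k" using sum.remove[of UNIV k r] r_sum by simp
  also have "\<dots> \<le> 1 - m" using bound[of "w k"] orthonormal_norm_eq_1[OF w] by (simp add: r_def)
  finally show ?thesis
    using trace_norm_eigenbasis[OF w\<mu>] sum_abs_eq_if_sum_eq_0(1)[OF sum] by simp
qed

text \<open>The expectation of \<open>\<rho> - |v\<rangle>\<langle>v|\<close> at \<open>v\<close> is \<open>\<Sum>\<^sub>i \<mu>\<^sub>i c\<^sub>i\<close> with weights
  \<open>c\<^sub>i = |\<langle>w\<^sub>i, v\<rangle>|\<^sup>2 \<in> [0, 1]\<close>, hence at least the sum of the nonpositive eigenvalues \<open>\<mu>\<^sub>i\<close>.\<close>

lemma trace_norm_diff_outer_ge:
  assumes \<rho>: "density \<rho>" and v: "cinner v v = 1"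
  shows "2 * (1 - Re (cinner v (\<rho> *v v))) \<le> trace_norm (\<rho> - outer v v)"
proof -
  obtain w \<mu> where w\<mu>: "eigenbasis (\<rho> - outer v v) w \<mu>" and sum: "(\<Sum>i\<in>UNIV. \<mu> i) = 0"
    using density_diff_eigenbasis[OF \<rho> density_outer[OF v]] by blast
  define c where "c i = (cmod (cinner (w i) v))\<^sup>2" for i
  have "norm v = 1" using v cinner_self_eq_1_iff by blast
  then have c_le: "c i \<le> 1" for i
    using orthonormal_coeff_le_norm[of w i v] w\<mu> by (simp add: c_def eigenbasis_def)
  have c_nonneg: "0 \<le> c i" for i by (simp add: c_def)
  have "(\<Sum>i | \<mu> i \<le> 0. \<mu> i) = (\<Sum>i\<in>UNIV. if \<mu> i \<le> 0 then \<mu> i else 0)"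
    by (simp add: sum.inter_filter[symmetric])
  also have "\<dots> \<le> (\<Sum>i\<in>UNIV. \<mu> i * c i)"
  proof (rule sum_mono)
    fix i
    show "(if \<mu> i \<le> 0 then \<mu> i else 0) \<le> \<mu> i * c i"
      using c_le[of i] c_nonneg[of i] by (auto intro: mult_nonneg_nonneg) (metis mult_left_mono_neg mult.right_neutral)
  qed
  also have "\<dots> = Re (cinner v ((\<rho> - outer v v) *v v))"
    unfolding c_def by (rule eigenbasis_form[OF w\<mu>, symmetric])
  also have "\<dots> = Re (cinner v (\<rho> *v v)) - 1"
    using v by (simp add: matrix_vector_mult_diff_rdistrib cinner_diff_right outer_mult_vector
        cinner_smult_right)
  finally show ?thesis
    using trace_norm_eigenbasis[OF w\<mu>] sum_abs_eq_if_sum_eq_0(2)[OF sum] by simp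
qed

theorem proposition7:
  fixes \<rho> :: "complex^'n^'n"
  assumes "density \<rho>"
  shows "(SUP \<xi>\<in>{\<xi>. density \<xi>}. trace_norm (\<rho> - \<xi>)) = 2 * (1 - boundariness \<rho>)"
proof -
  obtain u d where ud: "eigenbasis \<rho> u d" using density_eigenbasis[OF assms] by blast
  obtain v where v: "cinner v v = 1" and form: "Re (cinner v (\<rho> *v v)) = Min (range d)"
    using eigenbasis_min_eigenvector[OF ud] by blast
  have upper: "trace_norm (\<rho> - \<xi>) \<le> 2 * (1 - Min (range d))" if "density \<xi>" for \<xi>
    using trace_norm_diff_density_le[OF assms that eigenbasis_min_form[OF ud]] .
  have "2 * (1 - Min (range d)) \<in> (\<lambda>\<xi>. trace_norm (\<rho> - \<xi>)) ` {\<xi>. density \<xi>}"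
    using trace_norm_diff_outer_ge[OF assms v] upper[OF density_outer[OF v]] density_outer[OF v]
    unfolding form by (intro image_eqI[of _ _ "outer v v"]) auto
  then have "(SUP \<xi>\<in>{\<xi>. density \<xi>}. trace_norm (\<rho> - \<xi>)) = 2 * (1 - Min (range d))"
    using upper by (intro cSup_eq_maximum) auto
  then show ?thesis using boundariness_eq_min_eigenvalue[OF assms ud] by simp
qed

end
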